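(* Let $q$ be a prime power and $\mathbb F_q$ the field with $q$ elements. For $z\in\mathbb F_q$ let $v_z=(1,z,z^2,z^3)\in\mathbb F_q^4$, and let $\mathcal L_z=\{\{x+yv_z: y\in\mathbb F_q\}: x\in\mathbb F_q^4\}$ be the set of lines in direction $v_z$. Let $G=G(q)$ be the bipartite graph with parts $P=\mathbb F_q^4$ and $L=\bigcup_{z\in\mathbb F_q}\mathcal L_z$, where a point $p\in P$ is adjacent to a line $\ell\in L$ if and only if $p\in\ell$. Suppose $p_1\ell_1p_2\ell_2p_3\ell_3p_4\ell_4p_1$ is a cycle of length $8$ in $G$ (so $p_1,\dots,p_4\in P$ and $\ell_1,\dots,\ell_4\in L$ are eight distinct vertices, with $p_1,p_2\in\ell_1$, $p_2,p_3\in\ell_2$, $p_3,p_4\in\ell_3$, $p_4,p_1\in\ell_4$), and let $v_1,v_2,v_3,v_4$ be the directions of $\ell_1,\ell_2,\ell_3,\ell_4$ respectively (i.e. $v_i=v_{z}$ where $\ell_i\in\mathcal L_{z}$). Then $v_1=v_3$, $v_2=v_4$, and $v_1\neq v_2$. *)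

theory Defs
  imports "HOL-Analysis.Analysis"
begin

text \<open>Points of F_q^4 are modelled as vectors of type 'a ^ 4, where 'a is a
finite field (every finite field has prime-power order, and every F_q arises).\<close>

definition moment_dir :: "'a::field \<Rightarrow> 'a ^ 4" where
  "moment_dir z = vector [1, z, z ^ 2, z ^ 3]"

definition line_through :: "'a::field ^ 4 \<Rightarrow> 'a \<Rightarrow> ('a ^ 4) set" where
  "line_through x z = {x + y *s moment_dir z | y. True}"

definition lines_dir :: "'a::field \<Rightarrow> ('a ^ 4) set set" where
  "lines_dir z = {line_through x z | x. True}"

definition graph_lines :: "('a::field ^ 4) set set" where
  "graph_lines = (\<Union>z. lines_dir z)"

end

theory Submission
  imports Defs
begin

text \<open>The directions \<open>v\<^sub>z\<close> lie on the moment curve, so any four of them with distinct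
parameters are linearly independent (Vandermonde); in a relation
\<open>a\<^sub>1 v\<^sub>1 + \<dots> + a\<^sub>4 v\<^sub>4 = 0\<close> a coefficient vanishes as soon as its direction differs from
the other three. Going around an 8-cycle gives such a relation with nonzero steps \<open>a\<^sub>i\<close>,
since consecutive points are distinct, and with consecutive directions distinct, since
parallel lines through a common point coincide.\<close>

lemma moment_dir_nth [simp]:
  fixes z :: "'a::field"
  shows "moment_dir z $ 1 = 1" "moment_dir z $ 2 = z"
    "moment_dir z $ 3 = z ^ 2" "moment_dir z $ 4 = z ^ 3"
  unfolding moment_dir_def vector_def by simp_all

lemma moment_dir_eq_iff: "moment_dir z = moment_dir w \<longleftrightarrow> z = w"
  by (metis moment_dir_nth(2))

lemma moment_dir_cubic_functional:
  fixes a b c x :: "'a::field"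
  shows "moment_dir x $ 4 - (a + b + c) * moment_dir x $ 3
      + (a * b + a * c + b * c) * moment_dir x $ 2 - a * b * c * moment_dir x $ 1
    = (x - a) * (x - b) * (x - c)"
  by (simp add: algebra_simps power2_eq_square power3_eq_cube)

lemma moment_dir_relation_coeff_eq_0:
  fixes z1 z2 z3 z4 a1 a2 a3 a4 :: "'a::field"
  assumes rel: "a1 *s moment_dir z1 + a2 *s moment_dir z2 + a3 *s moment_dir z3
      + a4 *s moment_dir z4 = 0"
    and "z1 \<noteq> z2" "z1 \<noteq> z3" "z1 \<noteq> z4"
  shows "a1 = 0"
proof -
  define \<phi> :: "'a ^ 4 \<Rightarrow> 'a" where
    "\<phi> v = v $ 4 - (z2 + z3 + z4) * v $ 3 + (z2 * z3 + z2 * z4 + z3 * z4) * v $ 2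
      - z2 * z3 * z4 * v $ 1" for v
  define f where "f x = (x - z2) * (x - z3) * (x - z4)" for x
  have \<phi>_moment_dir: "\<phi> (moment_dir x) = f x" for x
    unfolding \<phi>_def f_def by (rule moment_dir_cubic_functional)
  have \<phi>_add: "\<phi> (v + w) = \<phi> v + \<phi> w" for v w
    by (simp add: \<phi>_def algebra_simps)
  have \<phi>_scale: "\<phi> (a *s v) = a * \<phi> v" for a v
    by (simp add: \<phi>_def algebra_simps)
  have "0 = \<phi> (a1 *s moment_dir z1 + a2 *s moment_dir z2 + a3 *s moment_dir z3
      + a4 *s moment_dir z4)"
    using rel by (simp add: \<phi>_def)
  also have "\<dots> = a1 * f z1 + a2 * f z2 + a3 * f z3 + a4 * f z4"
    by (simp only: \<phi>_add \<phi>_scale \<phi>_moment_dir)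
  also have "\<dots> = a1 * f z1"
    by (simp add: f_def)
  finally have "a1 * f z1 = 0" ..
  moreover have "f z1 \<noteq> 0"
    using assms(2-4) by (simp add: f_def)
  ultimately show ?thesis by simp
qed

lemma moment_dir_quadrilateral:
  fixes z1 z2 z3 z4 a1 a2 a3 a4 :: "'a::field"
  assumes rel: "a1 *s moment_dir z1 + a2 *s moment_dir z2 + a3 *s moment_dir z3
      + a4 *s moment_dir z4 = 0"
    and "a1 \<noteq> 0" "a2 \<noteq> 0"
    and "z1 \<noteq> z2" "z2 \<noteq> z3" "z3 \<noteq> z4" "z4 \<noteq> z1"
  shows "z1 = z3" "z2 = z4"
proof -
  show "z1 = z3"
    using moment_dir_relation_coeff_eq_0[OF rel] assms(2,4,7) by metis
  have "a2 *s moment_dir z2 + a3 *s moment_dir z3 + a4 *s moment_dir z4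
      + a1 *s moment_dir z1 = 0"
    using rel by (simp add: algebra_simps)
  then show "z2 = z4"
    using moment_dir_relation_coeff_eq_0 assms(3,4,5) by metis
qed

lemma lines_dir_diff:
  assumes "l \<in> lines_dir z" "p \<in> l" "q \<in> l"
  shows "\<exists>a. q - p = a *s moment_dir z"
proof -
  obtain x s t where "p = x + s *s moment_dir z" "q = x + t *s moment_dir z"
    using assms unfolding lines_dir_def line_through_def by blast
  then have "q - p = (t - s) *s moment_dir z"
    by (simp add: algebra_simps)
  then show ?thesis ..
qed

lemma line_through_eq:
  assumes "p \<in> line_through x z"
  shows "line_through p z = line_through x z"
proof -
  obtain s where p: "p = x + s *s moment_dir z"
    using assms unfolding line_through_def by blast
  have "p + t *s moment_dir z = x + (s + t) *s moment_dir z"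
    and "x + t *s moment_dir z = p + (t - s) *s moment_dir z" for t
    using p by (simp_all add: algebra_simps)
  then show ?thesis
    unfolding line_through_def by blast
qed

lemma lines_dir_common_point_eq:
  assumes "l \<in> lines_dir z" "m \<in> lines_dir z" "p \<in> l" "p \<in> m"
  shows "l = m"
  using assms line_through_eq unfolding lines_dir_def by blast

theorem lemma4p2:
  fixes p1 p2 p3 p4 :: "'a::{finite,field} ^ 4"
    and l1 l2 l3 l4 :: "('a ^ 4) set"
    and z1 z2 z3 z4 :: 'a
  assumes "l1 \<in> graph_lines" "l2 \<in> graph_lines" "l3 \<in> graph_lines" "l4 \<in> graph_lines"
    and "distinct [p1, p2, p3, p4]" "distinct [l1, l2, l3, l4]"
    and "p1 \<in> l1" "p2 \<in> l1" "p2 \<in> l2" "p3 \<in> l2"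
        "p3 \<in> l3" "p4 \<in> l3" "p4 \<in> l4" "p1 \<in> l4"
    and "l1 \<in> lines_dir z1" "l2 \<in> lines_dir z2" "l3 \<in> lines_dir z3" "l4 \<in> lines_dir z4"
  shows "moment_dir z1 = moment_dir z3 \<and> moment_dir z2 = moment_dir z4
         \<and> moment_dir z1 \<noteq> moment_dir z2"
proof -
  have "z1 \<noteq> z2"
    using lines_dir_common_point_eq[of l1 z1 l2 p2] assms(6,8,9,15,16) by auto
  moreover have "z2 \<noteq> z3"
    using lines_dir_common_point_eq[of l2 z2 l3 p3] assms(6,10,11,16,17) by auto
  moreover have "z3 \<noteq> z4"
    using lines_dir_common_point_eq[of l3 z3 l4 p4] assms(6,12,13,17,18) by auto
  moreover have "z4 \<noteq> z1"
    using lines_dir_common_point_eq[of l4 z4 l1 p1] assms(6,14,7,18,15) by auto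
  moreover obtain a1 a2 a3 a4 where
    a1: "p2 - p1 = a1 *s moment_dir z1" and a2: "p3 - p2 = a2 *s moment_dir z2" and
    a3: "p4 - p3 = a3 *s moment_dir z3" and a4: "p1 - p4 = a4 *s moment_dir z4"
    using lines_dir_diff assms(7-18) by metis
  moreover have "a1 *s moment_dir z1 + a2 *s moment_dir z2 + a3 *s moment_dir z3
      + a4 *s moment_dir z4 = 0"
    unfolding a1[symmetric] a2[symmetric] a3[symmetric] a4[symmetric] by simp
  moreover have "a1 \<noteq> 0" "a2 \<noteq> 0"
    using a1 a2 assms(5) by auto
  ultimately show ?thesis
    using moment_dir_quadrilateral moment_dir_eq_iff by metis
qed

end
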